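(* Let $\Lambda$ be a finitely aligned left cancellative small category. (1) For $\alpha,\beta\in\Lambda$ with $s(\alpha)=s(\beta)$, we have $\alpha\beta^*\in S_\Lambda^{\mathrm{Iso}}$ if and only if $\alpha\gamma\Lambda\cap\beta\gamma\Lambda\neq\emptyset$ for all $\gamma\in s(\beta)\Lambda$. (2) For $\alpha_i,\beta_i\in\Lambda$, $i=1,\dots,n$, with $s=\bigcup_{i=1}^n\alpha_i\beta_i^*\in S_\Lambda$, we have $s\in S_\Lambda^{\mathrm{Iso}}$ if and only if $\alpha_i\beta_i^*\in S_\Lambda^{\mathrm{Iso}}$ for all $i=1,\dots,n$.
   Context: $\Lambda$ is a small category (objects $\Lambda^0$, range $r$, source $s$), left cancellative, and finitely aligned: for all $\alpha,\beta$, $\alpha\Lambda\cap\beta\Lambda=\bigcup_{f\in F}f\Lambda$ for some finite $F$, where $\alpha\Lambda=\{\alpha\beta:s(\alpha)=r(\beta)\}$. Each $\alpha\in\Lambda$ is the partial bijection $s(\alpha)\Lambda\to\alpha\Lambda$, $\beta\mapsto\alpha\beta$, in the symmetric inverse monoid $\mathcal{I}(\Lambda)$ (composition on largest domain, zero the empty map), with inverse $\alpha^*:\alpha\beta\mapsto\beta$; $S_\Lambda$ is the inverse subsemigroup of $\mathcal{I}(\Lambda)$ generated by these; unions are unions of partial maps. For an inverse semigroup $S$ with natural order ($e\leqslant f$ iff $ef=e$ on idempotents), $S^{\mathrm{Iso}}=\{s\in S:ses^*e\neq0\text{ for every idempotent }0\neq e\leqslant s^*s\}$. *)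

theory Defs
  imports Main
begin

text \<open>A small category given by its set of morphisms Mor, its set of objects Obj
 (objects identified with their identity morphisms, so Obj is a subset of Mor),
 range rng, source src and composition cmp (cmp a b = ab, defined when
 src a = rng b).\<close>

definition small_category ::
  "'a set \<Rightarrow> 'a set \<Rightarrow> ('a \<Rightarrow> 'a) \<Rightarrow> ('a \<Rightarrow> 'a) \<Rightarrow> ('a \<Rightarrow> 'a \<Rightarrow> 'a) \<Rightarrow> bool" where
  "small_category Mor Obj rng src cmp \<longleftrightarrow>
     Obj \<subseteq> Mor \<and>
     (\<forall>a\<in>Mor. rng a \<in> Obj \<and> src a \<in> Obj) \<and>
     (\<forall>v\<in>Obj. rng v = v \<and> src v = v) \<and>
     (\<forall>a\<in>Mor. \<forall>b\<in>Mor. src a = rng b \<longrightarrow>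
        cmp a b \<in> Mor \<and> rng (cmp a b) = rng a \<and> src (cmp a b) = src b) \<and>
     (\<forall>a\<in>Mor. cmp (rng a) a = a \<and> cmp a (src a) = a) \<and>
     (\<forall>a\<in>Mor. \<forall>b\<in>Mor. \<forall>c\<in>Mor. src a = rng b \<longrightarrow> src b = rng c \<longrightarrow>
        cmp (cmp a b) c = cmp a (cmp b c))"

definition rideal :: "'a set \<Rightarrow> ('a \<Rightarrow> 'a) \<Rightarrow> ('a \<Rightarrow> 'a) \<Rightarrow> ('a \<Rightarrow> 'a \<Rightarrow> 'a) \<Rightarrow> 'a \<Rightarrow> 'a set" where
  "rideal Mor rng src cmp a = {cmp a b | b. b \<in> Mor \<and> src a = rng b}"

definition left_cancellative ::
  "'a set \<Rightarrow> ('a \<Rightarrow> 'a) \<Rightarrow> ('a \<Rightarrow> 'a) \<Rightarrow> ('a \<Rightarrow> 'a \<Rightarrow> 'a) \<Rightarrow> bool" where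
  "left_cancellative Mor rng src cmp \<longleftrightarrow>
     (\<forall>a\<in>Mor. \<forall>b\<in>Mor. \<forall>c\<in>Mor. src a = rng b \<longrightarrow> src a = rng c \<longrightarrow>
        cmp a b = cmp a c \<longrightarrow> b = c)"

definition finitely_aligned ::
  "'a set \<Rightarrow> ('a \<Rightarrow> 'a) \<Rightarrow> ('a \<Rightarrow> 'a) \<Rightarrow> ('a \<Rightarrow> 'a \<Rightarrow> 'a) \<Rightarrow> bool" where
  "finitely_aligned Mor rng src cmp \<longleftrightarrow>
     (\<forall>a\<in>Mor. \<forall>b\<in>Mor. \<exists>F. finite F \<and> F \<subseteq> Mor \<and>
        rideal Mor rng src cmp a \<inter> rideal Mor rng src cmp b
          = (\<Union>f\<in>F. rideal Mor rng src cmp f))"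

definition mor_map ::
  "'a set \<Rightarrow> ('a \<Rightarrow> 'a) \<Rightarrow> ('a \<Rightarrow> 'a) \<Rightarrow> ('a \<Rightarrow> 'a \<Rightarrow> 'a) \<Rightarrow> 'a \<Rightarrow> ('a \<rightharpoonup> 'a)" where
  "mor_map Mor rng src cmp a = (\<lambda>x. if x \<in> Mor \<and> rng x = src a then Some (cmp a x) else None)"

definition pinv :: "('a \<rightharpoonup> 'a) \<Rightarrow> ('a \<rightharpoonup> 'a)" where
  "pinv f = (\<lambda>y. if y \<in> ran f then Some (THE x. f x = Some y) else None)"

text \<open>S_Lambda: the inverse subsemigroup of the symmetric inverse monoid generated by
 the maps \<alpha> and \<alpha>^*. The product st is map composition (first t, then s).\<close>
inductive_set S_Lambda ::
  "'a set \<Rightarrow> ('a \<Rightarrow> 'a) \<Rightarrow> ('a \<Rightarrow> 'a) \<Rightarrow> ('a \<Rightarrow> 'a \<Rightarrow> 'a) \<Rightarrow> ('a \<rightharpoonup> 'a) set"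
  for Mor rng src cmp where
  gen: "a \<in> Mor \<Longrightarrow> mor_map Mor rng src cmp a \<in> S_Lambda Mor rng src cmp"
| gen_inv: "a \<in> Mor \<Longrightarrow> pinv (mor_map Mor rng src cmp a) \<in> S_Lambda Mor rng src cmp"
| mult: "f \<in> S_Lambda Mor rng src cmp \<Longrightarrow> g \<in> S_Lambda Mor rng src cmp \<Longrightarrow>
          (f \<circ>\<^sub>m g) \<in> S_Lambda Mor rng src cmp"

text \<open>S Iso for an inverse semigroup S of partial maps (zero = empty map,
 e \<le> f iff e f = e on idempotents).\<close>
definition Iso :: "('a \<rightharpoonup> 'a) set \<Rightarrow> ('a \<rightharpoonup> 'a) set" where
  "Iso S = {t \<in> S. \<forall>e\<in>S. (e \<circ>\<^sub>m e = e \<and> e \<noteq> Map.empty \<and> e \<circ>\<^sub>m (pinv t \<circ>\<^sub>m t) = e)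
              \<longrightarrow> t \<circ>\<^sub>m e \<circ>\<^sub>m pinv t \<circ>\<^sub>m e \<noteq> Map.empty}"

text \<open>Graph of a partial map (used for unions of partial maps).\<close>
definition map_graph :: "('a \<rightharpoonup> 'b) \<Rightarrow> ('a \<times> 'b) set" where
  "map_graph f = {(x, y). f x = Some y}"

end

(*
  Every element t of S_Lambda is an injective partial map on morphisms commuting with right
  multiplication: t x = y implies t (x d) = y d. So an idempotent of S_Lambda is the identity
  on its domain, and that domain contains z Lambda along with each of its points z; for
  z in dom t, the idempotent z z^* is the identity on z Lambda and lies below t^* t. Hence
  t is in S_Lambda^Iso iff for every z in dom t some point of z Lambda is mapped into z Lambda.
  For t = alpha beta^* and z = beta gamma this says that alpha gamma Lambda meets
  beta gamma Lambda; and the condition at z only involves t on z Lambda, so it passes to and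
  from the pieces of a union.
*)
theory Submission
  imports Defs
begin

lemma pinv_Some_iff:
  assumes "inj_on f (dom f)"
  shows "pinv f y = Some x \<longleftrightarrow> f x = Some y"
proof -
  have "(THE x'. f x' = Some y) = x" if "f x = Some y" for x
    using that assms by (auto intro!: the_equality intro: inj_onD)
  then show ?thesis
    by (auto simp: pinv_def ran_def)
qed

lemma inj_on_pinv:
  assumes "inj_on f (dom f)"
  shows "inj_on (pinv f) (dom (pinv f))"
  by (rule inj_onI) (auto simp: pinv_Some_iff[OF assms])

lemma inj_on_map_comp:
  assumes "inj_on f (dom f)" and "inj_on g (dom g)"
  shows "inj_on (f \<circ>\<^sub>m g) (dom (f \<circ>\<^sub>m g))"
proof (rule inj_onI)
  fix x x' assume "x \<in> dom (f \<circ>\<^sub>m g)" "x' \<in> dom (f \<circ>\<^sub>m g)" "(f \<circ>\<^sub>m g) x = (f \<circ>\<^sub>m g) x'"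
  then obtain y y' z where "g x = Some y" "g x' = Some y'" "f y = Some z" "f y' = Some z"
    by (auto simp: map_comp_Some_iff)
  with assms show "x = x'"
    by (metis domI inj_onD)
qed

lemma pinv_comp_self:
  assumes "inj_on f (dom f)"
  shows "(pinv f \<circ>\<^sub>m f) x = (if x \<in> dom f then Some x else None)"
  using assms by (auto simp: map_comp_Some_iff pinv_Some_iff map_comp_None_iff)

lemma dom_subset_if_le_pinv_comp:
  assumes "e \<circ>\<^sub>m (pinv f \<circ>\<^sub>m f) = e"
  shows "dom e \<subseteq> dom f"
proof
  fix x assume "x \<in> dom e"
  then have "(e \<circ>\<^sub>m (pinv f \<circ>\<^sub>m f)) x \<noteq> None" using assms by auto
  then show "x \<in> dom f" by (auto simp: map_comp_def split: option.splits)
qed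

lemma idempotent_map_fixes:
  assumes "inj_on e (dom e)" and "e \<circ>\<^sub>m e = e" and "e x = Some y"
  shows "y = x"
proof -
  have "(e \<circ>\<^sub>m e) x = Some y" using assms(2,3) by simp
  then have "e y = Some y" using assms(3) by (simp add: map_comp_Some_iff)
  with assms(1,3) show ?thesis by (metis domI inj_onD)
qed

locale left_cancellative_category =
  fixes Mor Obj :: "'a set" and rng src :: "'a \<Rightarrow> 'a" and cmp :: "'a \<Rightarrow> 'a \<Rightarrow> 'a"
  assumes category: "small_category Mor Obj rng src cmp"
    and cancellative: "left_cancellative Mor rng src cmp"
begin

abbreviation "S \<equiv> S_Lambda Mor rng src cmp"
abbreviation "ideal \<equiv> rideal Mor rng src cmp"
abbreviation "mor \<equiv> mor_map Mor rng src cmp"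
abbreviation "mor_star a b \<equiv> mor a \<circ>\<^sub>m pinv (mor b)"

lemma src_in_Mor [simp]: "a \<in> Mor \<Longrightarrow> src a \<in> Mor"
  and rng_src [simp]: "a \<in> Mor \<Longrightarrow> rng (src a) = src a"
  and cmp_src [simp]: "a \<in> Mor \<Longrightarrow> cmp a (src a) = a"
  using category unfolding small_category_def by auto

lemma cmp_in_Mor [simp]: "a \<in> Mor \<Longrightarrow> b \<in> Mor \<Longrightarrow> src a = rng b \<Longrightarrow> cmp a b \<in> Mor"
  and rng_cmp [simp]: "a \<in> Mor \<Longrightarrow> b \<in> Mor \<Longrightarrow> src a = rng b \<Longrightarrow> rng (cmp a b) = rng a"
  and src_cmp [simp]: "a \<in> Mor \<Longrightarrow> b \<in> Mor \<Longrightarrow> src a = rng b \<Longrightarrow> src (cmp a b) = src b"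
  using category unfolding small_category_def by auto

lemma cmp_assoc:
  "\<lbrakk>a \<in> Mor; b \<in> Mor; c \<in> Mor; src a = rng b; src b = rng c\<rbrakk> \<Longrightarrow> cmp (cmp a b) c = cmp a (cmp b c)"
  using category unfolding small_category_def by blast

lemma cmp_left_cancel:
  "\<lbrakk>a \<in> Mor; b \<in> Mor; c \<in> Mor; src a = rng b; src a = rng c; cmp a b = cmp a c\<rbrakk> \<Longrightarrow> b = c"
  using cancellative unfolding left_cancellative_def by blast

lemma mem_ideal_iff: "x \<in> ideal a \<longleftrightarrow> (\<exists>h. h \<in> Mor \<and> rng h = src a \<and> x = cmp a h)"
  by (auto simp: rideal_def)

lemma self_in_ideal: "a \<in> Mor \<Longrightarrow> a \<in> ideal a"
  by (metis cmp_src mem_ideal_iff rng_src src_in_Mor)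

lemma mor_Some_iff: "mor a x = Some y \<longleftrightarrow> x \<in> Mor \<and> rng x = src a \<and> y = cmp a x"
  by (auto simp: mor_map_def)

lemma inj_on_mor: "a \<in> Mor \<Longrightarrow> inj_on (mor a) (dom (mor a))"
  by (rule inj_onI) (auto simp: mor_Some_iff intro: cmp_left_cancel)

lemma pinv_mor_Some_iff:
  "a \<in> Mor \<Longrightarrow> pinv (mor a) y = Some x \<longleftrightarrow> x \<in> Mor \<and> rng x = src a \<and> y = cmp a x"
  by (simp add: pinv_Some_iff inj_on_mor mor_Some_iff)

lemma mor_star_Some_iff:
  assumes "a \<in> Mor" and "b \<in> Mor"
  shows "mor_star a b z = Some y \<longleftrightarrow>
    (\<exists>g. g \<in> Mor \<and> rng g = src b \<and> rng g = src a \<and> z = cmp b g \<and> y = cmp a g)"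
  using assms by (auto simp: map_comp_Some_iff pinv_mor_Some_iff mor_Some_iff)

lemma mor_star_in_S: "a \<in> Mor \<Longrightarrow> b \<in> Mor \<Longrightarrow> mor_star a b \<in> S"
  by (simp add: S_Lambda.intros)

lemma mor_star_self:
  assumes "a \<in> Mor"
  shows "mor_star a a x = (if x \<in> ideal a then Some x else None)"
proof (cases "mor_star a a x")
  case None
  then show ?thesis using mor_star_Some_iff[OF assms assms, of x x] by (auto simp: mem_ideal_iff)
next
  case (Some y)
  then show ?thesis using mor_star_Some_iff[OF assms assms] by (auto simp: mem_ideal_iff)
qed

lemma inj_on_S: "f \<in> S \<Longrightarrow> inj_on f (dom f)"
  by (induction rule: S_Lambda.induct) (simp_all add: inj_on_mor inj_on_pinv inj_on_map_comp)

definition right_equivariant :: "('a \<rightharpoonup> 'a) \<Rightarrow> bool" where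
  "right_equivariant f \<longleftrightarrow> (\<forall>x y. f x = Some y \<longrightarrow> x \<in> Mor \<and> y \<in> Mor \<and> src y = src x \<and>
      (\<forall>d\<in>Mor. rng d = src x \<longrightarrow> f (cmp x d) = Some (cmp y d)))"

lemma right_equivariant_mor: "a \<in> Mor \<Longrightarrow> right_equivariant (mor a)"
  by (auto simp: right_equivariant_def mor_Some_iff cmp_assoc)

lemma right_equivariant_pinv_mor: "a \<in> Mor \<Longrightarrow> right_equivariant (pinv (mor a))"
  by (auto simp: right_equivariant_def pinv_mor_Some_iff cmp_assoc)

lemma right_equivariant_map_comp:
  "right_equivariant f \<Longrightarrow> right_equivariant g \<Longrightarrow> right_equivariant (f \<circ>\<^sub>m g)"
  unfolding right_equivariant_def map_comp_Some_iff by (metis (no_types, lifting))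

lemma right_equivariant_S: "f \<in> S \<Longrightarrow> right_equivariant f"
  by (induction rule: S_Lambda.induct)
    (simp_all add: right_equivariant_mor right_equivariant_pinv_mor right_equivariant_map_comp)

lemma dom_S_subset_Mor: "f \<in> S \<Longrightarrow> dom f \<subseteq> Mor"
  using right_equivariant_S unfolding right_equivariant_def by blast

lemma S_Some_cmp:
  assumes "f \<in> S" and "f x = Some y" and "d \<in> Mor" and "rng d = src x"
  shows "f (cmp x d) = Some (cmp y d)"
  using right_equivariant_S[OF assms(1)] assms(2-4) unfolding right_equivariant_def by auto

lemma ideal_subset_dom_S:
  assumes "f \<in> S" and "z \<in> dom f"
  shows "ideal z \<subseteq> dom f"
proof
  fix u assume "u \<in> ideal z"
  then obtain h where "h \<in> Mor" "rng h = src z" "u = cmp z h" by (auto simp: mem_ideal_iff)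
  moreover obtain y where "f z = Some y" using assms(2) by auto
  ultimately show "u \<in> dom f" using S_Some_cmp[OF assms(1)] by blast
qed

lemma idempotent_S_fixes_ideal:
  assumes "e \<in> S" and "e \<circ>\<^sub>m e = e" and "z \<in> dom e" and "u \<in> ideal z"
  shows "e u = Some u"
proof -
  obtain z' where z': "e z = Some z'" using assms(3) by auto
  then have "e z = Some z"
    using idempotent_map_fixes[OF inj_on_S[OF assms(1)] assms(2)] by simp
  with assms(1,4) show ?thesis
    by (auto simp: mem_ideal_iff S_Some_cmp)
qed

definition returns_to_ideal :: "('a \<rightharpoonup> 'a) \<Rightarrow> 'a \<Rightarrow> bool" where
  "returns_to_ideal t z \<longleftrightarrow> (\<exists>u\<in>ideal z. \<exists>x\<in>ideal z. t u = Some x)"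

lemma Iso_S_if_returns_to_ideal:
  assumes t: "t \<in> S" and returns: "\<And>z. z \<in> dom t \<Longrightarrow> returns_to_ideal t z"
  shows "t \<in> Iso S"
proof -
  have "t \<circ>\<^sub>m e \<circ>\<^sub>m pinv t \<circ>\<^sub>m e \<noteq> Map.empty"
    if e: "e \<in> S" "e \<circ>\<^sub>m e = e" "e \<noteq> Map.empty" "e \<circ>\<^sub>m (pinv t \<circ>\<^sub>m t) = e" for e
  proof -
    obtain z where z: "z \<in> dom e" using e(3) by auto
    then have "z \<in> dom t" using dom_subset_if_le_pinv_comp[OF e(4)] by blast
    then obtain u x where u: "u \<in> ideal z" and x: "x \<in> ideal z" and tu: "t u = Some x"
      using returns unfolding returns_to_ideal_def by blast
    have "e u = Some u" and "e x = Some x"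
      using idempotent_S_fixes_ideal[OF e(1,2) z] u x by auto
    moreover have "pinv t x = Some u"
      using tu pinv_Some_iff[OF inj_on_S[OF t]] by blast
    ultimately have "(t \<circ>\<^sub>m e \<circ>\<^sub>m pinv t \<circ>\<^sub>m e) x = Some x"
      using tu by simp
    then show ?thesis by auto
  qed
  with t show ?thesis by (simp add: Iso_def)
qed

lemma returns_to_ideal_if_Iso_S:
  assumes iso: "t \<in> Iso S" and z: "z \<in> dom t"
  shows "returns_to_ideal t z"
proof -
  have t: "t \<in> S" using iso by (simp add: Iso_def)
  have "z \<in> Mor" using dom_S_subset_Mor[OF t] z by blast
  define e where "e = mor_star z z"
  have e_eq: "e x = (if x \<in> ideal z then Some x else None)" for x
    unfolding e_def using mor_star_self[OF \<open>z \<in> Mor\<close>] by simp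
  have "e \<in> S" using \<open>z \<in> Mor\<close> by (simp add: e_def mor_star_in_S)
  moreover have "e \<circ>\<^sub>m e = e"
    by (rule ext) (simp add: e_eq)
  moreover have "e \<noteq> Map.empty"
    using e_eq self_in_ideal[OF \<open>z \<in> Mor\<close>] by (metis option.distinct(1))
  moreover have "e \<circ>\<^sub>m (pinv t \<circ>\<^sub>m t) = e"
  proof
    fix x
    show "(e \<circ>\<^sub>m (pinv t \<circ>\<^sub>m t)) x = e x"
      using pinv_comp_self[OF inj_on_S[OF t], of x] ideal_subset_dom_S[OF t z]
      by (auto simp: e_eq map_comp_def[of e])
  qed
  ultimately have "t \<circ>\<^sub>m e \<circ>\<^sub>m pinv t \<circ>\<^sub>m e \<noteq> Map.empty"
    using iso unfolding Iso_def by blast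
  then obtain x where "(t \<circ>\<^sub>m e \<circ>\<^sub>m pinv t \<circ>\<^sub>m e) x \<noteq> None" by fastforce
  then obtain u where "x \<in> ideal z" "u \<in> ideal z" "pinv t x = Some u" "t u \<noteq> None"
    by (auto simp: map_comp_def e_eq split: option.splits if_splits)
  then show ?thesis
    unfolding returns_to_ideal_def using pinv_Some_iff[OF inj_on_S[OF t]] by blast
qed

lemma Iso_S_iff: "t \<in> S \<Longrightarrow> t \<in> Iso S \<longleftrightarrow> (\<forall>z\<in>dom t. returns_to_ideal t z)"
  using Iso_S_if_returns_to_ideal returns_to_ideal_if_Iso_S by blast

lemma mor_star_cmp:
  assumes "a \<in> Mor" "b \<in> Mor" "g \<in> Mor" "rng g = src b" "src a = src b"
  shows "mor_star a b (cmp b g) = Some (cmp a g)"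
  using assms mor_star_Some_iff by auto

lemma dom_mor_star:
  assumes "a \<in> Mor" "b \<in> Mor" "src a = src b"
  shows "dom (mor_star a b) = {cmp b g | g. g \<in> Mor \<and> rng g = src b}"
  using assms mor_star_Some_iff[OF assms(1,2)] by auto

lemma returns_to_ideal_mor_star_iff:
  assumes a: "a \<in> Mor" and b: "b \<in> Mor" and g: "g \<in> Mor" "rng g = src b" and ab: "src a = src b"
  shows "returns_to_ideal (mor_star a b) (cmp b g) \<longleftrightarrow> ideal (cmp a g) \<inter> ideal (cmp b g) \<noteq> {}"
proof
  assume "returns_to_ideal (mor_star a b) (cmp b g)"
  then obtain u x where u: "u \<in> ideal (cmp b g)" and x: "x \<in> ideal (cmp b g)"
    and ux: "mor_star a b u = Some x"
    unfolding returns_to_ideal_def by blast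
  obtain h where h: "h \<in> Mor" "rng h = src g" "u = cmp (cmp b g) h"
    using u g b by (auto simp: mem_ideal_iff)
  obtain g' where g': "g' \<in> Mor" "rng g' = src b" "u = cmp b g'" "x = cmp a g'"
    using ux mor_star_Some_iff[OF a b] by blast
  have "cmp b g' = cmp b (cmp g h)"
    using g' h g b by (simp add: cmp_assoc)
  then have "g' = cmp g h"
    using g' h g b by (auto intro: cmp_left_cancel)
  then have "x = cmp (cmp a g) h"
    using g' h g a ab by (simp add: cmp_assoc)
  then have "x \<in> ideal (cmp a g)"
    using h g a ab by (auto simp: mem_ideal_iff)
  with x show "ideal (cmp a g) \<inter> ideal (cmp b g) \<noteq> {}" by blast
next
  assume "ideal (cmp a g) \<inter> ideal (cmp b g) \<noteq> {}"
  then obtain \<mu> where \<mu>: "\<mu> \<in> Mor" "rng \<mu> = src g" and "cmp (cmp a g) \<mu> \<in> ideal (cmp b g)"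
    using a b g ab by (auto simp: mem_ideal_iff) blast
  moreover have "mor_star a b (cmp (cmp b g) \<mu>) = Some (cmp (cmp a g) \<mu>)"
    using S_Some_cmp[OF mor_star_in_S[OF a b] mor_star_cmp[OF a b g ab]] \<mu> b g by simp
  moreover have "cmp (cmp b g) \<mu> \<in> ideal (cmp b g)"
    using \<mu> b g by (auto simp: mem_ideal_iff)
  ultimately show "returns_to_ideal (mor_star a b) (cmp b g)"
    unfolding returns_to_ideal_def by blast
qed

lemma Iso_mor_star_iff:
  assumes "a \<in> Mor" "b \<in> Mor" "src a = src b"
  shows "mor_star a b \<in> Iso S \<longleftrightarrow>
    (\<forall>g\<in>Mor. rng g = src b \<longrightarrow> ideal (cmp a g) \<inter> ideal (cmp b g) \<noteq> {})"
  using assms by (auto simp: Iso_S_iff mor_star_in_S dom_mor_star returns_to_ideal_mor_star_iff)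

lemma returns_to_ideal_map_le:
  assumes "f \<in> S" and "f \<subseteq>\<^sub>m t" and "z \<in> dom f"
  shows "returns_to_ideal t z \<longleftrightarrow> returns_to_ideal f z"
proof -
  have "t u = f u" if "u \<in> ideal z" for u
    using that ideal_subset_dom_S[OF assms(1,3)] assms(2) unfolding map_le_def by (metis subsetD)
  then show ?thesis
    unfolding returns_to_ideal_def by auto
qed

lemma Iso_S_union_iff:
  assumes t: "t \<in> S" and f: "\<forall>i\<in>I. f i \<in> S"
    and graph: "map_graph t = (\<Union>i\<in>I. map_graph (f i))"
  shows "t \<in> Iso S \<longleftrightarrow> (\<forall>i\<in>I. f i \<in> Iso S)"
proof -
  have le: "f i \<subseteq>\<^sub>m t" if "i \<in> I" for i
    unfolding map_le_def
  proof
    fix x assume "x \<in> dom (f i)"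
    then obtain y where xy: "(x, y) \<in> map_graph (f i)" by (auto simp: map_graph_def)
    then have "(x, y) \<in> map_graph t" using graph that by blast
    with xy show "f i x = t x" by (simp add: map_graph_def)
  qed
  have "dom g = Domain (map_graph g)" for g :: "'a \<rightharpoonup> 'a"
    by (auto simp: map_graph_def)
  then have dom: "dom t = (\<Union>i\<in>I. dom (f i))"
    using graph by (simp add: Domain_Union image_image)
  have "returns_to_ideal t z \<longleftrightarrow> returns_to_ideal (f i) z" if "i \<in> I" "z \<in> dom (f i)" for i z
    using returns_to_ideal_map_le f le that by blast
  then show ?thesis
    by (auto simp: Iso_S_iff t f dom)
qed

end

theorem lemma4p3:
  fixes Mor Obj :: "'a set" and rng src :: "'a \<Rightarrow> 'a" and cmp :: "'a \<Rightarrow> 'a \<Rightarrow> 'a"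
  assumes cat: "small_category Mor Obj rng src cmp"
    and lc: "left_cancellative Mor rng src cmp"
    and fa: "finitely_aligned Mor rng src cmp"
  shows "(\<forall>a\<in>Mor. \<forall>b\<in>Mor. src a = src b \<longrightarrow>
            ((mor_map Mor rng src cmp a \<circ>\<^sub>m pinv (mor_map Mor rng src cmp b))
                \<in> Iso (S_Lambda Mor rng src cmp)
             \<longleftrightarrow> (\<forall>g\<in>Mor. rng g = src b \<longrightarrow>
                    rideal Mor rng src cmp (cmp a g) \<inter> rideal Mor rng src cmp (cmp b g) \<noteq> {})))
       \<and>
       (\<forall>(n::nat) (as::nat \<Rightarrow> 'a) (bs::nat \<Rightarrow> 'a) t.
          (\<forall>i\<in>{1..n}. as i \<in> Mor \<and> bs i \<in> Mor) \<longrightarrow>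
          t \<in> S_Lambda Mor rng src cmp \<longrightarrow>
          map_graph t = (\<Union>i\<in>{1..n}. map_graph
             (mor_map Mor rng src cmp (as i) \<circ>\<^sub>m pinv (mor_map Mor rng src cmp (bs i)))) \<longrightarrow>
          (t \<in> Iso (S_Lambda Mor rng src cmp) \<longleftrightarrow>
           (\<forall>i\<in>{1..n}. (mor_map Mor rng src cmp (as i) \<circ>\<^sub>m pinv (mor_map Mor rng src cmp (bs i)))
                          \<in> Iso (S_Lambda Mor rng src cmp))))"
proof -
  interpret left_cancellative_category Mor Obj rng src cmp
    using cat lc by unfold_locales
  show ?thesis
    by (intro conjI allI ballI impI Iso_mor_star_iff Iso_S_union_iff) (auto intro: mor_star_in_S)
qed

end
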